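(* If $f:\{0,1\}^n\to\{0,1\}$ is a monotone Boolean function, then $\max\{\mathsf N(f)^2,\mathsf N(\overline f)^2\}\ge\Omega(s(f))$.
   Context: $\mathsf N(f)$ is the minimum degree of a real polynomial $p$ with $|p(x)|\le1/3$ whenever $f(x)=0$ and $|p(x)|\ge1$ whenever $f(x)=1$; $\overline f=1-f$. $f$ is monotone if it is monotonically increasing or decreasing in the coordinatewise order. $s(f)$ is the sensitivity of $f$: the maximum over $x$ of the number of $i\in[n]$ with $f(x)\neq f(x^{\{i\}})$, where $x^{\{i\}}$ is $x$ with bit $i$ flipped. Constants are absolute. *)

theory Defs
  imports Complex_Main
begin

text \<open>Points of the Boolean cube {0,1}^n are represented by the set of
coordinates equal to 1, i.e. subsets of {..<n}. A Boolean function is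
f :: nat set \<Rightarrow> bool (True = 1); only its values on the cube matter.\<close>

definition cube :: "nat \<Rightarrow> nat set set" where
  "cube n = Pow {..<n}"

definition mpoly_eval :: "nat \<Rightarrow> (nat set \<Rightarrow> real) \<Rightarrow> nat set \<Rightarrow> real" where
  "mpoly_eval n c X = (\<Sum>S\<in>Pow {..<n}. c S * (\<Prod>i\<in>S. if i \<in> X then 1 else 0))"

definition mpoly_deg_le :: "nat \<Rightarrow> (nat set \<Rightarrow> real) \<Rightarrow> nat \<Rightarrow> bool" where
  "mpoly_deg_le n c d \<longleftrightarrow> (\<forall>S\<subseteq>{..<n}. c S \<noteq> 0 \<longrightarrow> card S \<le> d)"

definition nondet_deg :: "nat \<Rightarrow> (nat set \<Rightarrow> bool) \<Rightarrow> nat" where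
  "nondet_deg n f = (LEAST d. \<exists>c. mpoly_deg_le n c d \<and>
      (\<forall>X\<in>cube n. (\<not> f X \<longrightarrow> \<bar>mpoly_eval n c X\<bar> \<le> 1/3) \<and>
                   (f X \<longrightarrow> \<bar>mpoly_eval n c X\<bar> \<ge> 1)))"

definition sensitivity :: "nat \<Rightarrow> (nat set \<Rightarrow> bool) \<Rightarrow> nat" where
  "sensitivity n f = Max ((\<lambda>X. card {i\<in>{..<n}. f X \<noteq> f (X - {i} \<union> ({i} - X))}) ` cube n)"

definition monotone_bf :: "nat \<Rightarrow> (nat set \<Rightarrow> bool) \<Rightarrow> bool" where
  "monotone_bf n f \<longleftrightarrow>
     (\<forall>X\<in>cube n. \<forall>Y\<in>cube n. X \<subseteq> Y \<longrightarrow> (f X \<longrightarrow> f Y)) \<or>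
     (\<forall>X\<in>cube n. \<forall>Y\<in>cube n. X \<subseteq> Y \<longrightarrow> (f Y \<longrightarrow> f X))"

end

theory Submission
  imports Defs "HOL-Computational_Algebra.Polynomial"
begin

(* Let x be a point of maximal sensitivity s of f, with sensitive coordinates B, and let h be
   whichever of f and not f holds at x. Monotonicity forces h to be false at every point obtained
   from x by flipping a nonempty T within B. Take a nondeterministic polynomial p of degree
   d = N(h) for h and average p(x xor T) over a random T within B that contains each coordinate
   independently with probability y. This is a univariate polynomial q of degree at most d with
   q(0) = p(x), where |p(x)| >= 1, and |q(y)| <= (1-y)^s |p(x)| + 1/3 <= 5/6 |p(x)| for y in
   [1/s, 1]. If s > 100 d^2, Lagrange interpolation of q at the nodes (1 + 100 j^2)/s, j = 0..d,
   which lie in [1/s, 1] and have Lebesgue constant at 0 below 9/8, gives |q(0)| <= 15/16 |q(0)|,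
   which is absurd. Hence s <= 100 N(h)^2. *)

section \<open>Lagrange interpolation at quadratically spaced nodes\<close>

lemma fact_mult_prod_shift: "fact k * (\<Prod>i=1..m. i + k) = (fact (m + k) :: nat)"
proof -
  have "(\<Prod>i=1..m. i + k) = \<Prod>{Suc k..m + k}"
    using prod.shift_bounds_cl_nat_ivl[of id 1 k m] by simp
  then show ?thesis
    using fact_eq_fact_times[of k "m + k"] by simp
qed

lemma fact_square_le_fact_mult: "k \<le> D \<Longrightarrow> fact D ^ 2 \<le> (fact (D - k) * fact (D + k) :: nat)"
proof (induction k)
  case 0
  then show ?case by (simp add: power2_eq_square)
next
  case (Suc k)
  have "fact (D - k) = (D - k) * (fact (D - Suc k) :: nat)"
    using Suc.prems by (metis Suc_diff_Suc Suc_le_lessD fact_Suc of_nat_id)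
  then have "fact (D - k) * fact (D + k) = (D - k) * (fact (D - Suc k) * (fact (D + k) :: nat))"
    by simp
  also have "\<dots> \<le> (D + Suc k) * (fact (D - Suc k) * fact (D + k))"
    by (intro mult_right_mono) auto
  also have "\<dots> = fact (D - Suc k) * fact (D + Suc k)"
    by (simp add: algebra_simps)
  finally show ?case using Suc by simp
qed

lemma prod_abs_diff_eq_fact:
  assumes "j \<in> {1..D}"
  shows "(\<Prod>i\<in>{1..D}-{j}. \<bar>real i - real j\<bar>) = fact (j - 1) * fact (D - j)"
proof -
  have split: "{1..D}-{j} = {1..<j} \<union> {j<..D}" using assms by auto
  have "(\<Prod>i\<in>{1..<j}. \<bar>real i - real j\<bar>) = (\<Prod>k\<in>{1..j-1}. real k)"
    by (rule prod.reindex_bij_witness[where i="\<lambda>k. j - k" and j="\<lambda>i. j - i"]) (auto simp: of_nat_diff)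
  moreover have "(\<Prod>i\<in>{j<..D}. \<bar>real i - real j\<bar>) = (\<Prod>k\<in>{1..D-j}. real k)"
    by (rule prod.reindex_bij_witness[where i="\<lambda>k. k + j" and j="\<lambda>i. i - j"]) (auto simp: of_nat_diff)
  ultimately show ?thesis
    unfolding split by (subst prod.union_disjoint) (auto simp: fact_prod)
qed

lemma prod_square_ratio_le_2:
  assumes j: "j \<in> {1..D}"
  shows "(\<Prod>i\<in>{1..D}-{j}. (real i)^2 / \<bar>(real i)^2 - (real j)^2\<bar>) \<le> 2"
proof -
  let ?I = "{1..D}-{j}"
  define A where "A = (\<Prod>i\<in>?I. real i)"
  define C where "C = (\<Prod>i\<in>?I. real i + real j)"
  have "(\<Prod>i=1..D. real i) = real j * A"
    unfolding A_def by (rule prod.remove) (use j in auto)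
  then have fact_D: "fact D = real j * A"
    by (simp add: fact_prod)
  have "(\<Prod>i=1..D. real (i + j)) = real (j + j) * (\<Prod>i\<in>?I. real (i + j))"
    by (rule prod.remove) (use j in auto)
  moreover have "fact (D + j) = fact j * (\<Prod>i=1..D. real (i + j))"
    using arg_cong[OF fact_mult_prod_shift[of j D], of real] by simp
  ultimately have "fact (D + j) = fact j * (2 * real j * C)"
    unfolding C_def by simp
  also have "fact j = real j * fact (j - 1)"
    using j by (simp add: fact_num_eq_if)
  finally have fact_Dj: "fact (D + j) = real j * fact (j - 1) * (2 * real j * C)" .
  have "\<bar>(real i)^2 - (real j)^2\<bar> = \<bar>real i - real j\<bar> * (real i + real j)" for i
    unfolding power2_eq_square square_diff_square_factored abs_mult by simp
  then have "(\<Prod>i\<in>?I. (real i)^2 / \<bar>(real i)^2 - (real j)^2\<bar>)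
      = A^2 / ((\<Prod>i\<in>?I. \<bar>real i - real j\<bar>) * C)"
    unfolding A_def C_def by (simp add: prod_dividef prod.distrib flip: prod_power_distrib)
  also have "\<dots> = A^2 / (fact (j - 1) * fact (D - j) * C)"
    unfolding prod_abs_diff_eq_fact[OF j] ..
  also have "\<dots> = (2 * real j * real j) * A^2 / ((2 * real j * real j) * (fact (j - 1) * fact (D - j) * C))"
    using j by simp
  also have "\<dots> = 2 * fact D ^ 2 / (fact (D - j) * fact (D + j))"
    unfolding fact_D fact_Dj by (simp add: power2_eq_square mult_ac)
  also have "\<dots> \<le> 2"
    using fact_square_le_fact_mult[of j D] j
    by (simp add: divide_le_eq) (metis of_nat_fact of_nat_le_iff of_nat_mult of_nat_power)
  finally show ?thesis .
qed

lemma sum_inverse_squares_le_2: "(\<Sum>i=1..D. 1 / (real i)^2) \<le> 2"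
proof -
  have telescoped: "(\<Sum>i=1..D. 1 / (real i)^2) \<le> 2 - 1 / real D" if "D \<ge> 1" for D
    using that
  proof (induction D rule: dec_induct)
    case base
    then show ?case by simp
  next
    case (step D)
    have "1 / (real (Suc D))^2 \<le> 1 / (real D * real (Suc D))"
      using step by (intro frac_le) (auto simp: power2_eq_square)
    also have "\<dots> = 1 / real D - 1 / real (Suc D)"
      using step by (simp add: field_simps)
    finally show ?case
      using step by simp
  qed
  show ?thesis
  proof (cases "D = 0")
    case False
    moreover have "0 \<le> 1 / real D"
      by simp
    ultimately show ?thesis
      using telescoped[of D] by linarith
  qed simp
qed

lemma prod_one_plus_inverse_squares_le: "(\<Prod>i=1..D. 1 + 1 / (100 * (real i)^2)) \<le> exp (1/50)"
proof -
  have "(\<Prod>i=1..D. 1 + 1 / (100 * (real i)^2)) \<le> (\<Prod>i=1..D. exp (1 / (100 * (real i)^2)))"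
    by (intro prod_mono) (auto simp: exp_ge_add_one_self add_nonneg_nonneg)
  also have "\<dots> = exp ((\<Sum>i=1..D. 1 / (real i)^2) / 100)"
    by (simp add: exp_sum sum_divide_distrib ac_simps)
  also have "\<dots> \<le> exp (1/50)"
    using sum_inverse_squares_le_2[of D] by simp
  finally show ?thesis .
qed

text \<open>Because the nodes are spaced quadratically, the Lagrange basis at 0 decays like 1/j^2,
  so its total size is bounded independently of the degree.\<close>

definition interp_node :: "nat \<Rightarrow> real" where
  "interp_node i = 1 + 100 * (real i)^2"

lemma interp_node_pos: "0 < interp_node i"
  unfolding interp_node_def by (simp add: add_pos_nonneg)

lemma interp_node_ratio:
  assumes "i \<ge> 1" "i \<noteq> j"
  shows "interp_node i / \<bar>interp_node j - interp_node i\<bar>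
           = (1 + 1 / (100 * (real i)^2)) * ((real i)^2 / \<bar>(real i)^2 - (real j)^2\<bar>)"
proof -
  have ne: "(real i)^2 \<noteq> (real j)^2"
    using assms by simp
  have "interp_node j - interp_node i = 100 * ((real j)^2 - (real i)^2)"
    unfolding interp_node_def by (simp add: algebra_simps)
  then have "\<bar>interp_node j - interp_node i\<bar> = 100 * \<bar>(real i)^2 - (real j)^2\<bar>"
    by (simp only: abs_mult abs_minus_commute[of "(real j)^2"] abs_numeral)
  then show ?thesis
    using assms ne by (simp add: interp_node_def field_simps)
qed

lemma lebesgue_sum_interp_nodes_le:
  "(\<Sum>j\<le>D. \<Prod>i\<in>{..D}-{j}. interp_node i / \<bar>interp_node j - interp_node i\<bar>) \<le> 9/8"
proof -
  let ?L = "\<lambda>j. \<Prod>i\<in>{..D}-{j}. interp_node i / \<bar>interp_node j - interp_node i\<bar>"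
  define P where "P = (\<Prod>i=1..D. 1 + 1 / (100 * (real i)^2))"
  have P_ge_1: "1 \<le> P"
    unfolding P_def by (intro prod_ge_1) auto
  have "{..D}-{0} = {1..D}"
    by auto
  then have L_0: "?L 0 = P"
    unfolding P_def using interp_node_ratio[of _ 0] by (intro prod.cong) auto
  have L_j: "?L j \<le> 2 * P / (100 * (real j)^2)" if j: "j \<in> {1..D}" for j
  proof -
    have "{..D}-{j} = insert 0 ({1..D}-{j})"
      using j by auto
    then have "?L j = interp_node 0 / \<bar>interp_node j - interp_node 0\<bar>
        * (\<Prod>i\<in>{1..D}-{j}. interp_node i / \<bar>interp_node j - interp_node i\<bar>)"
      by simp
    also have "(\<Prod>i\<in>{1..D}-{j}. interp_node i / \<bar>interp_node j - interp_node i\<bar>)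
        = (\<Prod>i\<in>{1..D}-{j}. 1 + 1 / (100 * (real i)^2))
           * (\<Prod>i\<in>{1..D}-{j}. (real i)^2 / \<bar>(real i)^2 - (real j)^2\<bar>)"
      unfolding prod.distrib[symmetric] by (intro prod.cong refl interp_node_ratio) auto
    also have "interp_node 0 / \<bar>interp_node j - interp_node 0\<bar> = 1 / (100 * (real j)^2)"
      by (simp add: interp_node_def)
    also have "(\<Prod>i\<in>{1..D}-{j}. 1 + 1 / (100 * (real i)^2))
                 * (\<Prod>i\<in>{1..D}-{j}. (real i)^2 / \<bar>(real i)^2 - (real j)^2\<bar>) \<le> P * 2"
      unfolding P_def using j
      by (intro mult_mono prod_mono2 prod_square_ratio_le_2) (auto intro!: prod_nonneg)
    finally show ?thesis
      by (simp add: divide_right_mono mult_left_mono)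
  qed
  have "(\<Sum>j\<le>D. ?L j) = ?L 0 + (\<Sum>j=1..D. ?L j)"
    by (simp add: atMost_atLeast0 sum.atLeast_Suc_atMost)
  also have "\<dots> \<le> P + (\<Sum>j=1..D. 2 * P / (100 * (real j)^2))"
    using L_0 L_j by (intro add_mono sum_mono) auto
  also have "\<dots> = P + P / 50 * (\<Sum>j=1..D. 1 / (real j)^2)"
    by (simp add: sum_distrib_left)
  also have "\<dots> \<le> P + P / 50 * 2"
    using P_ge_1 sum_inverse_squares_le_2[of D] by (intro add_left_mono mult_left_mono) auto
  also have "\<dots> \<le> exp (1/50) * (26/25)"
    using prod_one_plus_inverse_squares_le[of D] unfolding P_def by simp
  also have "\<dots> \<le> (1 + 1/50 + (1/50)^2) * (26/25)"
    using exp_bound[of "1/50"] by simp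
  also have "\<dots> \<le> 9/8"
    by (simp add: power2_eq_square)
  finally show ?thesis .
qed

lemma lagrange_interpolation:
  fixes q :: "'a::field poly" and x :: "nat \<Rightarrow> 'a"
  assumes deg: "degree q \<le> D" and inj: "inj_on x {..D}"
  shows "poly q t = (\<Sum>j\<le>D. poly q (x j) * (\<Prod>i\<in>{..D}-{j}. (t - x i) / (x j - x i)))"
proof -
  define r where
    "r = (\<Sum>j\<le>D. smult (poly q (x j) / (\<Prod>i\<in>{..D}-{j}. x j - x i)) (\<Prod>i\<in>{..D}-{j}. [:- x i, 1:]))"
  have poly_r: "poly r t = (\<Sum>j\<le>D. poly q (x j) * (\<Prod>i\<in>{..D}-{j}. (t - x i) / (x j - x i)))" for t
    unfolding r_def by (simp add: poly_sum poly_prod prod_dividef)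
  have "degree r \<le> D"
    unfolding r_def
  proof (intro degree_sum_le order.trans[OF degree_smult_le])
    fix j assume "j \<in> {..D}"
    then show "degree (\<Prod>i\<in>{..D}-{j}. [:- x i, 1:]) \<le> D"
      using degree_prod_sum_le[of "{..D}-{j}" "\<lambda>i. [:- x i, 1:]"] by simp
  qed simp
  moreover have "poly r (x k) = poly q (x k)" if k: "k \<le> D" for k
  proof -
    have vanish: "(\<Prod>i\<in>{..D}-{j}. (x k - x i) / (x j - x i)) = (if j = k then 1 else 0)"
      if "j \<le> D" for j
      using k that inj by (auto intro: prod_zero simp: inj_on_eq_iff)
    have "poly r (x k) = (\<Sum>j\<le>D. if j = k then poly q (x j) else 0)"
      unfolding poly_r by (intro sum.cong) (auto simp: vanish)
    then show ?thesis
      using k by simp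
  qed
  moreover have "card (x ` {..D}) = Suc D"
    using inj by (simp add: card_image)
  ultimately have "r = q"
    using deg by (intro poly_eqI_degree[where A="x ` {..D}"]) auto
  then show ?thesis
    using poly_r[of t] by (simp only:)
qed

lemma abs_poly_le_lebesgue_function:
  fixes q :: "real poly"
  assumes "degree q \<le> D" and "inj_on x {..D}" and bound: "\<And>j. j \<le> D \<Longrightarrow> \<bar>poly q (x j)\<bar> \<le> M"
  shows "\<bar>poly q t\<bar> \<le> M * (\<Sum>j\<le>D. \<bar>\<Prod>i\<in>{..D}-{j}. (t - x i) / (x j - x i)\<bar>)"
proof -
  have "\<bar>poly q t\<bar> \<le> (\<Sum>j\<le>D. \<bar>poly q (x j)\<bar> * \<bar>\<Prod>i\<in>{..D}-{j}. (t - x i) / (x j - x i)\<bar>)"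
    unfolding lagrange_interpolation[OF assms(1,2), of t] abs_mult[symmetric] by (rule sum_abs)
  also have "\<dots> \<le> (\<Sum>j\<le>D. M * \<bar>\<Prod>i\<in>{..D}-{j}. (t - x i) / (x j - x i)\<bar>)"
    by (intro sum_mono mult_right_mono bound) auto
  finally show ?thesis
    by (simp add: sum_distrib_left)
qed

lemma abs_lagrange_basis_0_scaled_interp_nodes:
  assumes "0 < s"
  shows "\<bar>\<Prod>i\<in>{..d}-{j}. (0 - interp_node i / s) / (interp_node j / s - interp_node i / s)\<bar>
      = (\<Prod>i\<in>{..d}-{j}. interp_node i / \<bar>interp_node j - interp_node i\<bar>)"
  unfolding abs_prod
proof (rule prod.cong)
  fix i
  have "(0 - interp_node i / s) / (interp_node j / s - interp_node i / s)
      = - (interp_node i / (interp_node j - interp_node i))"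
    using assms by (simp add: field_simps)
  then show "\<bar>(0 - interp_node i / s) / (interp_node j / s - interp_node i / s)\<bar>
      = interp_node i / \<bar>interp_node j - interp_node i\<bar>"
    using interp_node_pos[of i] by simp
qed simp

lemma poly_0_bound_from_interval:
  fixes q :: "real poly"
  assumes deg: "degree q \<le> d" and s: "1 + 100 * (real d)^2 \<le> s"
    and bound: "\<And>y. 1 / s \<le> y \<Longrightarrow> y \<le> 1 \<Longrightarrow> \<bar>poly q y\<bar> \<le> M"
  shows "\<bar>poly q 0\<bar> \<le> 9/8 * M"
proof -
  have "0 \<le> 100 * (real d)^2"
    by simp
  then have s_ge_1: "1 \<le> s"
    using s by linarith
  define x where "x j = interp_node j / s" for j
  have inj: "inj_on x {..d}"
  proof (rule inj_onI)
    fix i j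
    assume "x i = x j"
    then have "interp_node i = interp_node j"
      using s_ge_1 by (simp add: x_def)
    then show "i = j"
      by (simp add: interp_node_def)
  qed
  have x_range: "1 / s \<le> x j \<and> x j \<le> 1" if "j \<le> d" for j
  proof -
    have "real j ^ 2 \<le> real d ^ 2"
      using that by (simp add: power_mono)
    then have "1 \<le> interp_node j \<and> interp_node j \<le> s"
      using s zero_le_power2[of "real j"] unfolding interp_node_def by linarith
    then show ?thesis
      using s_ge_1 by (simp add: x_def divide_right_mono)
  qed
  have M_nonneg: "0 \<le> M"
    using bound[of 1] s_ge_1 by (simp add: order.trans[OF abs_ge_zero])
  have "\<bar>poly q 0\<bar> \<le> M * (\<Sum>j\<le>d. \<bar>\<Prod>i\<in>{..d}-{j}. (0 - x i) / (x j - x i)\<bar>)"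
    using x_range by (intro abs_poly_le_lebesgue_function[OF deg inj] bound) auto
  also have "\<dots> = M * (\<Sum>j\<le>d. \<Prod>i\<in>{..d}-{j}. interp_node i / \<bar>interp_node j - interp_node i\<bar>)"
    using s_ge_1 unfolding x_def by (subst abs_lagrange_basis_0_scaled_interp_nodes) auto
  also have "\<dots> \<le> M * (9/8)"
    using M_nonneg by (intro mult_left_mono lebesgue_sum_interp_nodes_le)
  finally show ?thesis
    by simp
qed

section \<open>Averaging over random flips\<close>

definition bernoulli_weight :: "nat set \<Rightarrow> real \<Rightarrow> nat set \<Rightarrow> real" where
  "bernoulli_weight B y T = y ^ card T * (1 - y) ^ card (B - T)"

lemma bernoulli_weight_nonneg: "0 \<le> y \<Longrightarrow> y \<le> 1 \<Longrightarrow> 0 \<le> bernoulli_weight B y T"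
  by (simp add: bernoulli_weight_def)

lemma bernoulli_average_prod:
  fixes G :: "nat \<Rightarrow> bool \<Rightarrow> real"
  assumes "finite B"
  shows "(\<Sum>T\<in>Pow B. bernoulli_weight B y T * (\<Prod>i\<in>B. G i (i \<in> T)))
           = (\<Prod>i\<in>B. y * G i True + (1 - y) * G i False)"
proof -
  have "bernoulli_weight B y T * (\<Prod>i\<in>B. G i (i \<in> T))
          = (\<Prod>i\<in>T. y * G i True) * (\<Prod>i\<in>B-T. (1 - y) * G i False)" if "T \<subseteq> B" for T
  proof -
    have "(\<Prod>i\<in>B. G i (i \<in> T)) = (\<Prod>i\<in>T. G i (i \<in> T)) * (\<Prod>i\<in>B-T. G i (i \<in> T))"
      using assms that by (metis prod.subset_diff mult.commute)
    also have "\<dots> = (\<Prod>i\<in>T. G i True) * (\<Prod>i\<in>B-T. G i False)"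
      by (intro arg_cong2[where f=times] prod.cong) auto
    finally show ?thesis
      using assms that by (simp add: bernoulli_weight_def prod.distrib finite_subset)
  qed
  then show ?thesis
    by (simp add: prod_add[OF assms])
qed

lemma sum_bernoulli_weight: "finite B \<Longrightarrow> (\<Sum>T\<in>Pow B. bernoulli_weight B y T) = 1"
  using bernoulli_average_prod[of B y "\<lambda>_ _. 1"] by simp

lemma sum_bernoulli_weight_0:
  assumes "finite B"
  shows "(\<Sum>T\<in>Pow B. bernoulli_weight B 0 T * p T) = p {}"
proof -
  have "(\<Sum>T\<in>Pow B. bernoulli_weight B 0 T * p T) = (\<Sum>T\<in>Pow B. if T = {} then p T else 0)"
    using assms by (intro sum.cong) (auto simp: bernoulli_weight_def finite_subset)
  then show ?thesis
    using assms by simp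
qed

lemma bernoulli_average_bound:
  fixes p :: "nat set \<Rightarrow> real"
  assumes B: "finite B" and y: "0 \<le> y" "y \<le> 1" and \<epsilon>: "0 \<le> \<epsilon>"
    and small: "\<And>T. T \<subseteq> B \<Longrightarrow> T \<noteq> {} \<Longrightarrow> \<bar>p T\<bar> \<le> \<epsilon>"
  shows "\<bar>\<Sum>T\<in>Pow B. bernoulli_weight B y T * p T\<bar> \<le> (1 - y) ^ card B * \<bar>p {}\<bar> + \<epsilon>"
proof -
  let ?w = "bernoulli_weight B y"
  have split: "(\<Sum>T\<in>Pow B. f T) = f {} + (\<Sum>T\<in>Pow B - {{}}. f T)" for f :: "nat set \<Rightarrow> real"
    using B by (subst sum.remove) auto
  have "\<bar>\<Sum>T\<in>Pow B - {{}}. ?w T * p T\<bar> \<le> (\<Sum>T\<in>Pow B - {{}}. ?w T * \<epsilon>)"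
    using small y
    by (intro order.trans[OF sum_abs] sum_mono)
       (auto simp: abs_mult bernoulli_weight_nonneg intro!: mult_left_mono)
  also have "\<dots> \<le> 1 * \<epsilon>"
    using sum_bernoulli_weight[OF B, of y] split[of ?w] bernoulli_weight_nonneg[OF y, of B "{}"] \<epsilon>
    unfolding sum_distrib_right[symmetric] by (intro mult_right_mono) auto
  finally have "\<bar>\<Sum>T\<in>Pow B - {{}}. ?w T * p T\<bar> \<le> \<epsilon>"
    by simp
  moreover have "?w {} = (1 - y) ^ card B"
    by (simp add: bernoulli_weight_def)
  ultimately show ?thesis
    using y abs_triangle_ineq[of "?w {} * p {}" "\<Sum>T\<in>Pow B - {{}}. ?w T * p T"]
    unfolding split[of "\<lambda>T. ?w T * p T"] by (simp add: abs_mult)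
qed

lemma bernoulli_average_monomial:
  assumes B: "finite B" and S: "finite S"
  shows "(\<Sum>T\<in>Pow B. bernoulli_weight B y T * (\<Prod>i\<in>S. if i \<in> sym_diff a T then 1 else 0))
       = (\<Prod>i\<in>S-B. if i \<in> a then 1 else 0) * (\<Prod>i\<in>S \<inter> B. if i \<in> a then 1 - y else y)"
proof -
  define K :: real where "K = (\<Prod>i\<in>S-B. if i \<in> a then 1 else 0)"
  define G :: "nat \<Rightarrow> bool \<Rightarrow> real" where
    "G i b = (if i \<in> S then (if (i \<in> a) \<noteq> b then 1 else 0) else 1)" for i b
  have restrict: "(\<Prod>i\<in>S \<inter> B. f i) = (\<Prod>i\<in>B. if i \<in> S then f i else 1)" for f :: "nat \<Rightarrow> real"
    using B by (simp add: prod.inter_filter[symmetric] Int_def conj_commute)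
  have "(\<Prod>i\<in>S. if i \<in> sym_diff a T then 1 else 0) = K * (\<Prod>i\<in>B. G i (i \<in> T))"
    if "T \<subseteq> B" for T
  proof -
    have "(\<Prod>i\<in>S. if i \<in> sym_diff a T then 1 else (0::real))
        = (\<Prod>i\<in>S-B. if i \<in> sym_diff a T then 1 else 0) * (\<Prod>i\<in>S \<inter> B. if i \<in> sym_diff a T then 1 else 0)"
      using prod.Int_Diff[OF S, of _ B] by (simp add: mult.commute)
    also have "(\<Prod>i\<in>S-B. if i \<in> sym_diff a T then 1 else (0::real)) = K"
      unfolding K_def using that by (intro prod.cong) auto
    also have "(\<Prod>i\<in>S \<inter> B. if i \<in> sym_diff a T then 1 else (0::real)) = (\<Prod>i\<in>B. G i (i \<in> T))"
      unfolding restrict G_def by (intro prod.cong) auto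
    finally show ?thesis .
  qed
  then have "(\<Sum>T\<in>Pow B. bernoulli_weight B y T * (\<Prod>i\<in>S. if i \<in> sym_diff a T then 1 else 0))
      = K * (\<Sum>T\<in>Pow B. bernoulli_weight B y T * (\<Prod>i\<in>B. G i (i \<in> T)))"
    by (simp add: sum_distrib_left mult_ac)
  also have "\<dots> = K * (\<Prod>i\<in>B. y * G i True + (1 - y) * G i False)"
    by (simp add: bernoulli_average_prod[OF B])
  also have "(\<Prod>i\<in>B. y * G i True + (1 - y) * G i False) = (\<Prod>i\<in>S \<inter> B. if i \<in> a then 1 - y else y)"
    unfolding restrict G_def by (intro prod.cong) auto
  finally show ?thesis
    unfolding K_def .
qed

lemma bernoulli_average_mpoly:
  assumes deg: "mpoly_deg_le n c d" and B: "B \<subseteq> {..<n}"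
  obtains q :: "real poly" where "degree q \<le> d"
    and "\<And>y. poly q y = (\<Sum>T\<in>Pow B. bernoulli_weight B y T * mpoly_eval n c (sym_diff a T))"
proof
  have fin_B: "finite B"
    using B finite_subset by blast
  define K where "K S = (\<Prod>i\<in>S-B. if i \<in> a then 1 else (0::real))" for S
  define Q where "Q S = (\<Prod>i\<in>S \<inter> B. if i \<in> a then [:1, -1:] else [:0, 1::real:])" for S
  define q where "q = (\<Sum>S\<in>Pow {..<n}. smult (c S * K S) (Q S))"
  show "degree q \<le> d"
    unfolding q_def
  proof (intro degree_sum_le)
    fix S assume S: "S \<in> Pow {..<n}"
    then have "finite S"
      using finite_subset by auto
    have "degree (if i \<in> a then [:1, -1:] else [:0, 1::real:]) = 1" for i
      by (simp add: degree_pCons_eq_if)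
    then have "degree (Q S) \<le> card (S \<inter> B)"
      unfolding Q_def
      using degree_prod_sum_le[of "S \<inter> B" "\<lambda>i. if i \<in> a then [:1, -1:] else [:0, 1::real:]"]
        \<open>finite S\<close>
      by (simp add: o_def)
    also have "\<dots> \<le> card S"
      using \<open>finite S\<close> by (intro card_mono) auto
    finally show "degree (smult (c S * K S) (Q S)) \<le> d"
      using deg S unfolding mpoly_deg_le_def by (cases "c S = 0") auto
  qed simp
  fix y :: real
  have poly_factor: "poly (if i \<in> a then [:1, -1:] else [:0, 1:]) y = (if i \<in> a then 1 - y else y)" for i
    by (simp add: algebra_simps)
  have "poly q y = (\<Sum>S\<in>Pow {..<n}. c S * (K S * (\<Prod>i\<in>S \<inter> B. if i \<in> a then 1 - y else y)))"
    unfolding q_def Q_def by (simp add: poly_sum poly_prod poly_factor mult.assoc del: poly_pCons)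
  also have "\<dots> = (\<Sum>S\<in>Pow {..<n}. c S * (\<Sum>T\<in>Pow B. bernoulli_weight B y T
                     * (\<Prod>i\<in>S. if i \<in> sym_diff a T then 1 else 0)))"
  proof (intro sum.cong refl arg_cong[where f="times (c _)"])
    fix S
    assume "S \<in> Pow {..<n}"
    then have "finite S"
      using finite_subset by auto
    then show "K S * (\<Prod>i\<in>S \<inter> B. if i \<in> a then 1 - y else y)
        = (\<Sum>T\<in>Pow B. bernoulli_weight B y T * (\<Prod>i\<in>S. if i \<in> sym_diff a T then 1 else 0))"
      unfolding K_def by (rule bernoulli_average_monomial[OF fin_B, symmetric])
  qed
  also have "\<dots> = (\<Sum>T\<in>Pow B. bernoulli_weight B y T * mpoly_eval n c (sym_diff a T))"
    unfolding mpoly_eval_def sum_distrib_left by (subst sum.swap) (simp add: mult_ac)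
  finally show "poly q y = (\<Sum>T\<in>Pow B. bernoulli_weight B y T * mpoly_eval n c (sym_diff a T))" .
qed

lemma one_minus_power_le_half:
  fixes y :: real
  assumes "1 \<le> y * real n" and "y \<le> 1"
  shows "(1 - y) ^ n \<le> 1/2"
proof -
  have "(1 - y) ^ n \<le> exp (- y) ^ n"
    using assms(2) exp_ge_add_one_self[of "- y"] by (intro power_mono) auto
  also have "\<dots> = exp (- (y * real n))"
    by (simp add: mult.commute flip: exp_of_nat_mult)
  also have "\<dots> \<le> exp (- 1)"
    using assms(1) by simp
  also have "\<dots> \<le> 1/2"
    using exp_ge_add_one_self[of 1] by (simp add: exp_minus' divide_le_eq)
  finally show ?thesis .
qed

lemma card_block_le_of_mpoly_gap:
  assumes deg: "mpoly_deg_le n c d" and B: "B \<subseteq> {..<n}"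
    and at_a: "1 \<le> \<bar>mpoly_eval n c a\<bar>"
    and off_a: "\<And>T. T \<subseteq> B \<Longrightarrow> T \<noteq> {} \<Longrightarrow> \<bar>mpoly_eval n c (sym_diff a T)\<bar> \<le> 1/3"
  shows "card B \<le> 100 * d^2"
proof (rule ccontr)
  assume "\<not> ?thesis"
  then have "1 + 100 * d^2 \<le> card B"
    by simp
  then have "real (1 + 100 * d^2) \<le> real (card B)"
    by (simp only: of_nat_le_iff)
  then have s: "1 + 100 * (real d)^2 \<le> real (card B)"
    by simp
  have fin_B: "finite B"
    using B finite_subset by blast
  define v where "v = mpoly_eval n c a"
  obtain q :: "real poly" where deg_q: "degree q \<le> d"
    and poly_q: "\<And>y. poly q y = (\<Sum>T\<in>Pow B. bernoulli_weight B y T * mpoly_eval n c (sym_diff a T))"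
    using bernoulli_average_mpoly[OF deg B] by blast
  have "poly q 0 = v"
    unfolding poly_q sum_bernoulli_weight_0[OF fin_B] v_def by simp
  moreover have "\<bar>poly q y\<bar> \<le> 5/6 * \<bar>v\<bar>" if y: "1 / real (card B) \<le> y" "y \<le> 1" for y
  proof -
    have "0 < real (card B)"
      using s zero_le_power2[of "real d"] by linarith
    then have "1 \<le> y * real (card B)" "0 \<le> y"
      using y by (auto simp: divide_le_eq mult.commute intro: order.trans[OF _ y(1)])
    have "\<bar>poly q y\<bar> \<le> (1 - y) ^ card B * \<bar>mpoly_eval n c (sym_diff a {})\<bar> + 1/3"
      unfolding poly_q using \<open>0 \<le> y\<close> y(2) off_a by (intro bernoulli_average_bound fin_B) auto
    also have "\<dots> = (1 - y) ^ card B * \<bar>v\<bar> + 1/3"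
      unfolding v_def by simp
    also have "\<dots> \<le> 1/2 * \<bar>v\<bar> + 1/3 * \<bar>v\<bar>"
      using one_minus_power_le_half[OF \<open>1 \<le> y * real (card B)\<close> y(2)] at_a unfolding v_def
      by (intro add_mono mult_right_mono) auto
    finally show ?thesis
      by simp
  qed
  ultimately have "\<bar>v\<bar> \<le> 9/8 * (5/6 * \<bar>v\<bar>)"
    using poly_0_bound_from_interval[OF deg_q s] by metis
  then show False
    using at_a unfolding v_def by simp
qed

section \<open>Nondeterministic degree\<close>

lemma mpoly_eval_eq_sum_Pow:
  assumes "X \<subseteq> {..<n}"
  shows "mpoly_eval n c X = (\<Sum>S\<in>Pow X. c S)"
proof -
  have "c S * (\<Prod>i\<in>S. if i \<in> X then 1 else 0) = (if S \<subseteq> X then c S else 0)"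
    if "S \<in> Pow {..<n}" for S
  proof (cases "S \<subseteq> X")
    case False
    then show ?thesis
      using that finite_subset[of S "{..<n}"] by (auto intro: prod_zero)
  next
    case True
    then have "(\<Prod>i\<in>S. if i \<in> X then 1 else 0) = (1::real)"
      by (intro prod.neutral) auto
    with True show ?thesis
      by simp
  qed
  then have "mpoly_eval n c X = (\<Sum>S\<in>Pow {..<n}. if S \<subseteq> X then c S else 0)"
    unfolding mpoly_eval_def by (rule sum.cong[OF refl])
  also have "\<dots> = (\<Sum>S\<in>{S \<in> Pow {..<n}. S \<subseteq> X}. c S)"
    by (rule sum.inter_filter[symmetric]) simp
  also have "{S \<in> Pow {..<n}. S \<subseteq> X} = Pow X"
    using assms by auto
  finally show ?thesis .
qed

lemma mpoly_exact_representation: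
  fixes g :: "nat set \<Rightarrow> real"
  obtains c where "\<And>X. X \<in> cube n \<Longrightarrow> mpoly_eval n c X = g X"
proof
  define c where "c S = (-1) ^ card S * (\<Sum>T\<in>Pow S. (-1) ^ card T * g T)" for S
  fix X
  assume "X \<in> cube n"
  then have "X \<subseteq> {..<n}"
    by (simp add: cube_def)
  then have "mpoly_eval n c X = (\<Sum>S\<in>Pow X. c S)"
    by (rule mpoly_eval_eq_sum_Pow)
  also have "\<dots> = g X"
    unfolding c_def using \<open>X \<subseteq> {..<n}\<close>
    by (intro inclusion_exclusion_symmetric[where f=g, symmetric]) (auto intro: finite_subset)
  finally show "mpoly_eval n c X = g X" .
qed

lemma nondet_deg_representation:
  obtains c where "mpoly_deg_le n c (nondet_deg n g)"
    and "\<And>X. X \<in> cube n \<Longrightarrow> \<not> g X \<Longrightarrow> \<bar>mpoly_eval n c X\<bar> \<le> 1/3"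
    and "\<And>X. X \<in> cube n \<Longrightarrow> g X \<Longrightarrow> 1 \<le> \<bar>mpoly_eval n c X\<bar>"
proof -
  let ?rep = "\<lambda>d c. mpoly_deg_le n c d \<and>
      (\<forall>X\<in>cube n. (\<not> g X \<longrightarrow> \<bar>mpoly_eval n c X\<bar> \<le> 1/3) \<and> (g X \<longrightarrow> \<bar>mpoly_eval n c X\<bar> \<ge> 1))"
  obtain c where c: "\<And>X. X \<in> cube n \<Longrightarrow> mpoly_eval n c X = (if g X then 1 else 0)"
    using mpoly_exact_representation[of n "\<lambda>X. if g X then 1 else 0"] by blast
  have "mpoly_deg_le n c n"
    unfolding mpoly_deg_le_def using card_mono[of "{..<n}"] by fastforce
  then have "?rep n c"
    using c by simp
  then have "\<exists>d c. ?rep d c"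
    by blast
  then have "\<exists>c. ?rep (nondet_deg n g) c"
    unfolding nondet_deg_def by (rule LeastI_ex)
  then show ?thesis
    using that by blast
qed

lemma card_flip_block_le_nondet_deg:
  assumes "x \<in> cube n" and "g x" and B: "B \<subseteq> {..<n}"
    and flips: "\<And>T. T \<subseteq> B \<Longrightarrow> T \<noteq> {} \<Longrightarrow> \<not> g (sym_diff x T)"
  shows "card B \<le> 100 * nondet_deg n g ^ 2"
proof -
  obtain c where deg: "mpoly_deg_le n c (nondet_deg n g)"
    and zero: "\<And>X. X \<in> cube n \<Longrightarrow> \<not> g X \<Longrightarrow> \<bar>mpoly_eval n c X\<bar> \<le> 1/3"
    and one: "\<And>X. X \<in> cube n \<Longrightarrow> g X \<Longrightarrow> 1 \<le> \<bar>mpoly_eval n c X\<bar>"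
    using nondet_deg_representation[of n g] by blast
  show ?thesis
  proof (rule card_block_le_of_mpoly_gap[OF deg B])
    show "1 \<le> \<bar>mpoly_eval n c x\<bar>"
      using assms by (intro one)
    fix T
    assume "T \<subseteq> B" "T \<noteq> {}"
    moreover have "sym_diff x T \<in> cube n"
      using assms \<open>T \<subseteq> B\<close> unfolding cube_def by auto
    ultimately show "\<bar>mpoly_eval n c (sym_diff x T)\<bar> \<le> 1/3"
      using flips by (intro zero)
  qed
qed

section \<open>Monotone functions\<close>

lemma monotone_bf_not: "monotone_bf n f \<Longrightarrow> monotone_bf n (\<lambda>X. \<not> f X)"
  unfolding monotone_bf_def by blast

lemma increasing_flip_block:
  assumes up: "\<forall>X\<in>cube n. \<forall>Y\<in>cube n. X \<subseteq> Y \<longrightarrow> h X \<longrightarrow> h Y"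
    and x: "x \<in> cube n" and "h x"
    and B: "B \<subseteq> {..<n}" and single: "\<And>i. i \<in> B \<Longrightarrow> \<not> h (sym_diff x {i})"
    and T: "T \<subseteq> B" "T \<noteq> {}"
  shows "\<not> h (sym_diff x T)"
proof
  assume hT: "h (sym_diff x T)"
  have in_cube: "X \<subseteq> x \<union> B \<Longrightarrow> X \<in> cube n" for X
    using x B by (auto simp: cube_def)
  have "B \<subseteq> x"
  proof
    fix j
    assume j: "j \<in> B"
    show "j \<in> x"
    proof (rule ccontr)
      assume "j \<notin> x"
      then have "sym_diff x {j} = insert j x"
        by auto
      moreover have "h (insert j x)"
        by (rule up[rule_format, of x]) (use \<open>h x\<close> j in \<open>auto intro: in_cube\<close>)
      ultimately show False
        using single[OF j] by metis
    qed
  qed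
  obtain i where i: "i \<in> T"
    using T by auto
  then have "sym_diff x T = x - T" "sym_diff x {i} = x - {i}"
    using T \<open>B \<subseteq> x\<close> by auto
  moreover have "h (x - {i})"
    by (rule up[rule_format, of "x - T"])
      (use hT i \<open>sym_diff x T = x - T\<close> in \<open>auto intro: in_cube\<close>)
  ultimately show False
    using single i T by (metis subsetD)
qed

lemma decreasing_flip_block:
  assumes down: "\<forall>X\<in>cube n. \<forall>Y\<in>cube n. X \<subseteq> Y \<longrightarrow> h Y \<longrightarrow> h X"
    and x: "x \<in> cube n" and "h x"
    and B: "B \<subseteq> {..<n}" and single: "\<And>i. i \<in> B \<Longrightarrow> \<not> h (sym_diff x {i})"
    and T: "T \<subseteq> B" "T \<noteq> {}"
  shows "\<not> h (sym_diff x T)"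
proof
  assume hT: "h (sym_diff x T)"
  have in_cube: "X \<subseteq> x \<union> B \<Longrightarrow> X \<in> cube n" for X
    using x B by (auto simp: cube_def)
  have "B \<inter> x = {}"
  proof (rule ccontr)
    assume "B \<inter> x \<noteq> {}"
    then obtain j where j: "j \<in> B" "j \<in> x"
      by blast
    then have "sym_diff x {j} = x - {j}"
      by auto
    moreover have "h (x - {j})"
      by (rule down[rule_format, of _ x]) (use \<open>h x\<close> in \<open>auto intro: in_cube\<close>)
    ultimately show False
      using single[OF j(1)] by metis
  qed
  obtain i where i: "i \<in> T"
    using T by auto
  then have "sym_diff x T = x \<union> T" "sym_diff x {i} = insert i x"
    using T \<open>B \<inter> x = {}\<close> by auto
  moreover have "h (insert i x)"
    by (rule down[rule_format, of _ "x \<union> T"])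
      (use hT i T \<open>sym_diff x T = x \<union> T\<close> in \<open>auto intro: in_cube\<close>)
  ultimately show False
    using single i T by (metis subsetD)
qed

lemma monotone_bf_flip_block:
  assumes "monotone_bf n h" and "x \<in> cube n" and "h x"
    and "B \<subseteq> {..<n}" and "\<And>i. i \<in> B \<Longrightarrow> \<not> h (sym_diff x {i})"
    and "T \<subseteq> B" "T \<noteq> {}"
  shows "\<not> h (sym_diff x T)"
  using assms increasing_flip_block[of n h x B T] decreasing_flip_block[of n h x B T]
  unfolding monotone_bf_def by blast

lemma sensitivity_attained:
  obtains x where "x \<in> cube n"
    and "card {i \<in> {..<n}. f x \<noteq> f (sym_diff x {i})} = sensitivity n f"
proof -
  have "finite (cube n)" "cube n \<noteq> {}"
    unfolding cube_def by auto
  then have "sensitivity n f \<in> (\<lambda>X. card {i \<in> {..<n}. f X \<noteq> f (sym_diff X {i})}) ` cube n"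
    unfolding sensitivity_def by (intro Max_in) auto
  then show ?thesis
    using that by auto
qed

theorem lemma3p7:
  shows "\<exists>C::real > 0. \<forall>(n::nat) (f::nat set \<Rightarrow> bool). monotone_bf n f \<longrightarrow>
     C * real (sensitivity n f) \<le>
       max (real (nondet_deg n f) ^ 2) (real (nondet_deg n (\<lambda>X. \<not> f X)) ^ 2)"
proof (intro exI[of _ "1/100"] conjI allI impI)
  fix n :: nat and f :: "nat set \<Rightarrow> bool"
  assume mono: "monotone_bf n f"
  obtain x where x: "x \<in> cube n"
    and s: "card {i \<in> {..<n}. f x \<noteq> f (sym_diff x {i})} = sensitivity n f"
    by (rule sensitivity_attained)
  define h where "h X \<longleftrightarrow> f X = f x" for X
  have h_cases: "h = f \<or> h = (\<lambda>X. \<not> f X)"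
    by (cases "f x") (auto simp: h_def)
  then have "monotone_bf n h"
    using mono monotone_bf_not by metis
  let ?B = "{i \<in> {..<n}. f x \<noteq> f (sym_diff x {i})}"
  have flips: "\<not> h (sym_diff x T)" if "T \<subseteq> ?B" "T \<noteq> {}" for T
    by (rule monotone_bf_flip_block[OF \<open>monotone_bf n h\<close> x _ _ _ that]) (auto simp: h_def)
  have "sensitivity n f \<le> 100 * nondet_deg n h ^ 2"
    unfolding s[symmetric]
    by (rule card_flip_block_le_nondet_deg[where g=h, OF x _ _ flips]) (auto simp: h_def)
  then have "real (sensitivity n f) \<le> 100 * real (nondet_deg n h) ^ 2"
    by (metis of_nat_le_iff of_nat_mult of_nat_numeral of_nat_power)
  then show "1/100 * real (sensitivity n f)
      \<le> max (real (nondet_deg n f) ^ 2) (real (nondet_deg n (\<lambda>X. \<not> f X)) ^ 2)"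
    using h_cases by auto
qed simp

end
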